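(* Let $I\subseteq\mathfrak{M}$ be an ideal, let $Z=\{z_1,\dots,z_s\}$ be a set of distinct indeterminates in $X$, let $\sigma$ be a $Z$-separating term ordering for $I$, and let $\{\frac1{c_1}f_1,\dots,\frac1{c_s}f_s,g_1,\dots,g_t\}$ be a $Z$-separating $\sigma$-Gröbner basis of $I$ (with $(f_1,\dots,f_s)$ coherently $Z$-separating, $c_i=\mathrm{LC}_\sigma(f_i)$, $z_i=\mathrm{LT}_\sigma(f_i)$, and $\{g_1,\dots,g_t\}$ the reduced $\hat\sigma$-Gröbner basis of $I\cap\widehat P$). Write $X\setminus Z=\{y_1,\dots,y_{n-s}\}$. (a) Let $\varphi:P\to\widehat P$ be the $K$-algebra homomorphism with $\varphi(x_i)=x_i$ if $x_i\notin Z$ and $\varphi(x_i)=\mathrm{tail}_{z_j}(f_j)$ if $x_i=z_j$. Then $\varphi$ induces a $K$-algebra isomorphism $\Phi:P/I\to\widehat P/(I\cap\widehat P)$, $\Phi(x_i+I)=\varphi(x_i)+(I\cap\widehat P)$. (b) The inverse $\Phi^{-1}$ is given by $y_i+(I\cap\widehat P)\mapsto y_i+I$ for $i=1,\dots,n-s$. (c) $\Phi$ and $\Phi^{-1}$ do not depend on the choice of the $Z$-separating $\sigma$-Gröbner basis of $I$; in particular they may be defined using the reduced $\sigma$-Gröbner basis of $I$.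
   Context: $K$ is a field, $P=K[x_1,\dots,x_n]$, $X=\{x_1,\dots,x_n\}$, $\mathfrak{M}=\langle x_1,\dots,x_n\rangle$, $\widehat P=K[X\setminus Z]$, $\hat\sigma$ the restriction of $\sigma$ to $\widehat P$. For $f\in P$, $\mathrm{indets}(f)$ is the set of indeterminates dividing some term in the support of $f$. For $f\in\mathfrak{M}$ with nonzero degree-one part $\mathrm{Lin}_{\mathfrak{M}}(f)$, $z\in\mathrm{indets}(\mathrm{Lin}_{\mathfrak M}(f))$, and $c\neq 0$ the coefficient of $z$ in $f$, set $\mathrm{tail}_z(f)=z-\frac1cf$; $f$ is $z$-separating if $z\notin\mathrm{indets}(\mathrm{tail}_z(f))$. A tuple $(f_1,\dots,f_s)$ of nonzero elements of $\mathfrak M$ is coherently $Z$-separating if each $f_i$ is $z_i$-separating and $z_i\notin\mathrm{indets}(f_j)$ for $j\ne i$. A term ordering $\sigma$ is a $Z$-separating term ordering for $I$ if there are $f_1,\dots,f_s\in I\setminus\{0\}$ with $z_i=\mathrm{LT}_\sigma(f_i)$ and $(f_1,\dots,f_s)$ coherently $Z$-separating. For such $\sigma$, a $Z$-separating $\sigma$-Gröbner basis of $I$ is a $\sigma$-Gröbner basis of the form $\{\frac1{c_1}f_1,\dots,\frac1{c_s}f_s,g_1,\dots,g_t\}$ with $(f_1,\dots,f_s)$ coherently $Z$-separating, $c_i=\mathrm{LC}_\sigma(f_i)$, $z_i=\mathrm{LT}_\sigma(f_i)$, and $\{g_1,\dots,g_t\}$ the reduced $\hat\sigma$-Gröbner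 basis of $I\cap\widehat P$. *)

theory Defs
  imports "HOL-Library.Poly_Mapping" "HOL-Algebra.QuotRing"
begin

text \<open>Multivariate polynomials over a field 'k in the finitely many indeterminates
  given by the elements of a finite type 'v (the set X = UNIV).\<close>

type_synonym 'v pterm = "'v \<Rightarrow>\<^sub>0 nat"
type_synonym ('v, 'k) mpoly = "('v \<Rightarrow>\<^sub>0 nat) \<Rightarrow>\<^sub>0 'k"

definition mpoly_ring :: "('v, 'k::field) mpoly ring" where
  "mpoly_ring = \<lparr>carrier = UNIV, monoid.mult = (*), one = 1, zero = 0, add = (+)\<rparr>"

definition var :: "'v \<Rightarrow> ('v, 'k::field) mpoly" where
  "var v = Poly_Mapping.single (Poly_Mapping.single v 1) 1"

definition const :: "'k \<Rightarrow> ('v, 'k::field) mpoly" where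
  "const c = Poly_Mapping.single 0 c"

definition indets :: "('v, 'k::field) mpoly \<Rightarrow> 'v set" where
  "indets f = (\<Union>t\<in>Poly_Mapping.keys f. Poly_Mapping.keys t)"

definition Mideal :: "('v, 'k::field) mpoly set" where
  "Mideal = {f. Poly_Mapping.lookup f 0 = 0}"

definition Phat :: "'v set \<Rightarrow> ('v, 'k::field) mpoly set" where
  "Phat Z = {f. indets f \<subseteq> - Z}"

definition Phat_ring :: "'v set \<Rightarrow> ('v, 'k::field) mpoly ring" where
  "Phat_ring Z = mpoly_ring\<lparr>carrier := Phat Z\<rparr>"

definition lin_part :: "('v, 'k::field) mpoly \<Rightarrow> ('v, 'k) mpoly" where
  "lin_part f = (\<Sum>v\<in>indets f. Poly_Mapping.single (Poly_Mapping.single v 1) (Poly_Mapping.lookup f (Poly_Mapping.single v 1)))"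

definition tail :: "'v \<Rightarrow> ('v, 'k::field) mpoly \<Rightarrow> ('v, 'k) mpoly" where
  "tail z f = var z - const (1 / Poly_Mapping.lookup f (Poly_Mapping.single z 1)) * f"

definition z_separating :: "'v \<Rightarrow> ('v, 'k::field) mpoly \<Rightarrow> bool" where
  "z_separating z f \<longleftrightarrow> f \<in> Mideal \<and> lin_part f \<noteq> 0 \<and> z \<in> indets (lin_part f)
      \<and> z \<notin> indets (tail z f)"

definition coh_Z_sep :: "nat \<Rightarrow> (nat \<Rightarrow> 'v) \<Rightarrow> (nat \<Rightarrow> ('v, 'k::field) mpoly) \<Rightarrow> bool" where
  "coh_Z_sep s z f \<longleftrightarrow> (\<forall>i<s. f i \<noteq> 0 \<and> f i \<in> Mideal \<and> z_separating (z i) (f i)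
      \<and> (\<forall>j<s. j \<noteq> i \<longrightarrow> z i \<notin> indets (f j)))"

definition term_order :: "('v pterm \<Rightarrow> 'v pterm \<Rightarrow> bool) \<Rightarrow> bool" where
  "term_order \<sigma> \<longleftrightarrow> (\<forall>t. \<sigma> t t) \<and> (\<forall>s t. \<sigma> s t \<and> \<sigma> t s \<longrightarrow> s = t)
     \<and> (\<forall>s t u. \<sigma> s t \<and> \<sigma> t u \<longrightarrow> \<sigma> s u) \<and> (\<forall>s t. \<sigma> s t \<or> \<sigma> t s)
     \<and> (\<forall>s t u. \<sigma> s t \<longrightarrow> \<sigma> (s + u) (t + u)) \<and> (\<forall>t. \<sigma> 0 t)"

definition restr_order :: "('v pterm \<Rightarrow> 'v pterm \<Rightarrow> bool) \<Rightarrow> 'v set \<Rightarrow> 'v pterm \<Rightarrow> 'v pterm \<Rightarrow> bool" where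
  "restr_order \<sigma> Z s t \<longleftrightarrow> Poly_Mapping.keys s \<inter> Z = {} \<and> Poly_Mapping.keys t \<inter> Z = {} \<and> \<sigma> s t"

definition LT :: "('v pterm \<Rightarrow> 'v pterm \<Rightarrow> bool) \<Rightarrow> ('v, 'k::field) mpoly \<Rightarrow> 'v pterm" where
  "LT \<sigma> f = (THE t. t \<in> Poly_Mapping.keys f \<and> (\<forall>u\<in>Poly_Mapping.keys f. \<sigma> u t))"

definition LC :: "('v pterm \<Rightarrow> 'v pterm \<Rightarrow> bool) \<Rightarrow> ('v, 'k::field) mpoly \<Rightarrow> 'k" where
  "LC \<sigma> f = Poly_Mapping.lookup f (LT \<sigma> f)"

definition tdvd :: "'v pterm \<Rightarrow> 'v pterm \<Rightarrow> bool" where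
  "tdvd s t \<longleftrightarrow> (\<exists>u. t = s + u)"

text \<open>G is a sigma-Groebner basis of J: a finite set of nonzero elements of J whose leading
  terms generate the leading term ideal of J (a term lies in a monomial ideal iff it is
  divisible by one of the generating terms).\<close>
definition is_GB :: "('v pterm \<Rightarrow> 'v pterm \<Rightarrow> bool) \<Rightarrow> ('v, 'k::field) mpoly set \<Rightarrow> ('v, 'k) mpoly set \<Rightarrow> bool" where
  "is_GB \<sigma> G J \<longleftrightarrow> finite G \<and> G \<subseteq> J \<and> 0 \<notin> G
     \<and> (\<forall>f\<in>J. f \<noteq> 0 \<longrightarrow> (\<exists>g\<in>G. tdvd (LT \<sigma> g) (LT \<sigma> f)))"

definition is_reduced_GB :: "('v pterm \<Rightarrow> 'v pterm \<Rightarrow> bool) \<Rightarrow> ('v, 'k::field) mpoly set \<Rightarrow> ('v, 'k) mpoly set \<Rightarrow> bool" where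
  "is_reduced_GB \<sigma> G J \<longleftrightarrow> is_GB \<sigma> G J \<and>
     (\<forall>g\<in>G. LC \<sigma> g = 1 \<and> (\<forall>t\<in>Poly_Mapping.keys g. \<forall>g'\<in>G. g' \<noteq> g \<longrightarrow> \<not> tdvd (LT \<sigma> g') t))"

definition Z_sep_order :: "('v pterm \<Rightarrow> 'v pterm \<Rightarrow> bool) \<Rightarrow> ('v, 'k::field) mpoly set \<Rightarrow> nat \<Rightarrow> (nat \<Rightarrow> 'v) \<Rightarrow> bool" where
  "Z_sep_order \<sigma> I s z \<longleftrightarrow> term_order \<sigma> \<and> (\<exists>f. (\<forall>i<s. f i \<in> I \<and> f i \<noteq> 0
       \<and> LT \<sigma> (f i) = Poly_Mapping.single (z i) 1) \<and> coh_Z_sep s z f)"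

definition basis_set :: "('v pterm \<Rightarrow> 'v pterm \<Rightarrow> bool) \<Rightarrow> nat \<Rightarrow> (nat \<Rightarrow> ('v, 'k::field) mpoly) \<Rightarrow> ('v, 'k) mpoly set \<Rightarrow> ('v, 'k) mpoly set" where
  "basis_set \<sigma> s f G = {const (1 / LC \<sigma> (f i)) * f i | i. i < s} \<union> G"

definition Z_sep_GB :: "('v pterm \<Rightarrow> 'v pterm \<Rightarrow> bool) \<Rightarrow> ('v, 'k::field) mpoly set \<Rightarrow> nat \<Rightarrow> (nat \<Rightarrow> 'v)
     \<Rightarrow> (nat \<Rightarrow> ('v, 'k) mpoly) \<Rightarrow> ('v, 'k) mpoly set \<Rightarrow> bool" where
  "Z_sep_GB \<sigma> I s z f G \<longleftrightarrow> coh_Z_sep s z f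
     \<and> (\<forall>i<s. LT \<sigma> (f i) = Poly_Mapping.single (z i) 1)
     \<and> is_GB \<sigma> (basis_set \<sigma> s f G) I
     \<and> is_reduced_GB (restr_order \<sigma> (z ` {..<s})) G (I \<inter> Phat (z ` {..<s}))"

definition subst :: "('v \<Rightarrow> ('v, 'k::field) mpoly) \<Rightarrow> ('v, 'k) mpoly \<Rightarrow> ('v, 'k) mpoly" where
  "subst h f = (\<Sum>t\<in>Poly_Mapping.keys f. const (Poly_Mapping.lookup f t) * (\<Prod>v\<in>Poly_Mapping.keys t. h v ^ Poly_Mapping.lookup t v))"

definition phi :: "nat \<Rightarrow> (nat \<Rightarrow> 'v) \<Rightarrow> (nat \<Rightarrow> ('v, 'k::field) mpoly) \<Rightarrow> ('v, 'k) mpoly \<Rightarrow> ('v, 'k) mpoly" where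
  "phi s z f = subst (\<lambda>x. if x \<in> z ` {..<s} then tail x (f (inv_into {..<s} z x)) else var x)"

end

theory Submission
  imports Defs "HOL-Algebra.Subrings"
begin

(* Each f_i lies in I and equals c_i (z_i - tail_{z_i}(f_i)), so every z_i is congruent modulo I
   to a polynomial in K[X \ Z]; consequently phi(a) lies in K[X \ Z] and phi(a) = a modulo I.
   Hence the inclusion K[X \ Z] -> P/I is onto with kernel I \<inter> K[X \ Z], and Phi is the inverse
   of the induced isomorphism. Since Phi(a + I) is the unique class of K[X \ Z] meeting a + I, it
   does not depend on the basis. In the reduced basis, the element with leading term z_i is the
   only one in which z_i occurs, and inside it z_i occurs only linearly, which gives the
   coherently Z-separating shape. *)

lemma mpoly_ring_simps [simp]:
  "carrier (mpoly_ring :: ('v, 'k::field) mpoly ring) = UNIV"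
  "mult (mpoly_ring :: ('v, 'k::field) mpoly ring) = (*)"
  "add (mpoly_ring :: ('v, 'k::field) mpoly ring) = (+)"
  "one (mpoly_ring :: ('v, 'k::field) mpoly ring) = 1"
  "zero (mpoly_ring :: ('v, 'k::field) mpoly ring) = 0"
  by (simp_all add: mpoly_ring_def)

lemma cring_mpoly_ring: "cring (mpoly_ring :: ('v, 'k::field) mpoly ring)"
proof (rule cringI)
  show "abelian_group (mpoly_ring :: ('v, 'k) mpoly ring)"
    by (rule abelian_groupI) (auto simp: algebra_simps intro: exI[of _ "- _"])
  show "Group.comm_monoid (mpoly_ring :: ('v, 'k) mpoly ring)"
    by (rule comm_monoidI) (auto simp: algebra_simps)
qed (auto simp: algebra_simps)

lemma a_inv_mpoly_ring [simp]: "a_inv (mpoly_ring :: ('v, 'k::field) mpoly ring) x = - x"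
proof -
  interpret cring "mpoly_ring :: ('v, 'k) mpoly ring" by (rule cring_mpoly_ring)
  show ?thesis using minus_equality[of "- x" x] by simp
qed

lemma mpoly_ring_coset_eq_iff:
  assumes "ideal I (mpoly_ring :: ('v, 'k::field) mpoly ring)"
  shows "I +>\<^bsub>mpoly_ring\<^esub> a = I +>\<^bsub>mpoly_ring\<^esub> b \<longleftrightarrow> a - b \<in> I"
proof -
  interpret cring "mpoly_ring :: ('v, 'k) mpoly ring" by (rule cring_mpoly_ring)
  show ?thesis using quotient_eq_iff_same_a_r_cos[OF assms] by (simp add: a_minus_def)
qed

context
  fixes I :: "('v, 'k::field) mpoly set"
  assumes I: "ideal I mpoly_ring"
begin

lemma mpoly_ideal_zero: "0 \<in> I"
  using additive_subgroup.zero_closed[OF ideal.axioms(1)[OF I]] by simp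

lemma mpoly_ideal_add: "a \<in> I \<Longrightarrow> b \<in> I \<Longrightarrow> a + b \<in> I"
  using additive_subgroup.a_closed[OF ideal.axioms(1)[OF I]] by simp

lemma mpoly_ideal_mult_left: "a \<in> I \<Longrightarrow> x * a \<in> I"
  using ideal.I_l_closed[OF I] by simp

lemma mpoly_ideal_diff: "a \<in> I \<Longrightarrow> b \<in> I \<Longrightarrow> a - b \<in> I"
  using mpoly_ideal_add[of a "(-1) * b"] mpoly_ideal_mult_left[of b "-1"] by simp

lemma mpoly_ideal_sum: "(\<And>x. x \<in> S \<Longrightarrow> g x \<in> I) \<Longrightarrow> sum g S \<in> I"
  by (induction S rule: infinite_finite_induct) (auto simp: mpoly_ideal_zero mpoly_ideal_add)

lemma mpoly_ideal_power_diff: "x - y \<in> I \<Longrightarrow> x ^ n - y ^ n \<in> I"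
proof (induction n)
  case (Suc n)
  have "x ^ Suc n - y ^ Suc n = x * (x ^ n - y ^ n) + y ^ n * (x - y)"
    by (simp add: algebra_simps)
  then show ?case using Suc by (simp add: mpoly_ideal_add mpoly_ideal_mult_left)
qed (simp add: mpoly_ideal_zero)

lemma mpoly_ideal_prod_diff:
  "(\<And>v. v \<in> S \<Longrightarrow> x v - y v \<in> I) \<Longrightarrow> prod x S - prod y S \<in> I"
proof (induction S rule: infinite_finite_induct)
  case (insert a F)
  have "prod x (insert a F) - prod y (insert a F)
      = x a * (prod x F - prod y F) + prod y F * (x a - y a)"
    using insert by (simp add: algebra_simps)
  then show ?case using insert by (simp add: mpoly_ideal_add mpoly_ideal_mult_left)
qed (auto simp: mpoly_ideal_zero)

end

lemma sum_single_lookup: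
  "(\<Sum>t\<in>Poly_Mapping.keys f. Poly_Mapping.single t (Poly_Mapping.lookup f t)) = f"
proof (rule poly_mapping_eqI)
  fix k
  show "Poly_Mapping.lookup (\<Sum>t\<in>Poly_Mapping.keys f. Poly_Mapping.single t (Poly_Mapping.lookup f t)) k
      = Poly_Mapping.lookup f k"
    by (cases "k \<in> Poly_Mapping.keys f") (auto simp: lookup_sum lookup_single when_def in_keys_iff)
qed

lemma var_power: "var v ^ n = (Poly_Mapping.single (Poly_Mapping.single v n) 1 :: ('v, 'k::field) mpoly)"
  by (induction n) (auto simp: var_def mult_single single_add[symmetric] add.commute)

lemma prod_single_one:
  "(\<Prod>v\<in>S. Poly_Mapping.single (g v) (1::'k::field)) = Poly_Mapping.single (sum g S) 1"
  by (induction S rule: infinite_finite_induct) (auto simp: mult_single)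

lemma monomial_eq_prod_var_power:
  "(\<Prod>v\<in>Poly_Mapping.keys t. var v ^ Poly_Mapping.lookup t v)
     = (Poly_Mapping.single t 1 :: ('v, 'k::field) mpoly)"
  by (simp add: var_power prod_single_one sum_single_lookup)

lemma const_mult_single_one: "const c * Poly_Mapping.single t 1 = Poly_Mapping.single t c"
  by (simp add: const_def mult_single)

lemma subst_var: "subst var a = a"
  unfolding subst_def monomial_eq_prod_var_power const_mult_single_one by (rule sum_single_lookup)

lemma subst_diff_in_ideal:
  assumes I: "ideal I mpoly_ring" and h: "\<And>v. h v - var v \<in> I"
  shows "subst h a - a \<in> I"
proof -
  have "subst h a - a = subst h a - subst var a" by (simp add: subst_var)
  also have "\<dots> = (\<Sum>t\<in>Poly_Mapping.keys a. const (Poly_Mapping.lookup a t) *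
     ((\<Prod>v\<in>Poly_Mapping.keys t. h v ^ Poly_Mapping.lookup t v)
       - (\<Prod>v\<in>Poly_Mapping.keys t. var v ^ Poly_Mapping.lookup t v)))"
    by (simp add: subst_def sum_subtractf algebra_simps)
  also have "\<dots> \<in> I"
    by (intro mpoly_ideal_sum[OF I] mpoly_ideal_mult_left[OF I] mpoly_ideal_prod_diff[OF I]
        mpoly_ideal_power_diff[OF I] h)
  finally show ?thesis .
qed

lemma indets_add: "indets (p + q) \<subseteq> indets p \<union> indets q"
  unfolding indets_def using keys_add[of p q] by blast

lemma indets_uminus [simp]: "indets (- p) = indets p"
  unfolding indets_def by simp

lemma indets_diff: "indets (p - q) \<subseteq> indets p \<union> indets q"
  unfolding indets_def using keys_diff[of p q] by blast

lemma indets_mult: "indets (p * q) \<subseteq> indets p \<union> indets q"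
proof
  fix v assume "v \<in> indets (p * q)"
  then obtain t where t: "t \<in> Poly_Mapping.keys (p * q)" "v \<in> Poly_Mapping.keys t"
    unfolding indets_def by blast
  then obtain a b where "t = a + b" "a \<in> Poly_Mapping.keys p" "b \<in> Poly_Mapping.keys q"
    using keys_mult[of p q] by blast
  then show "v \<in> indets p \<union> indets q"
    using t keys_add[of a b] unfolding indets_def by blast
qed

lemma indets_const [simp]: "indets (const c) = {}"
  by (simp add: indets_def const_def)

lemma indets_var [simp]: "indets (var v :: ('v, 'k::field) mpoly) = {v}"
  by (simp add: indets_def var_def)

lemma Phat_add: "p \<in> Phat Z \<Longrightarrow> q \<in> Phat Z \<Longrightarrow> p + q \<in> Phat Z"
  using indets_add[of p q] by (auto simp: Phat_def)

lemma Phat_uminus: "p \<in> Phat Z \<Longrightarrow> - p \<in> Phat Z"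
  by (simp add: Phat_def)

lemma Phat_mult: "p \<in> Phat Z \<Longrightarrow> q \<in> Phat Z \<Longrightarrow> p * q \<in> Phat Z"
  using indets_mult[of p q] by (auto simp: Phat_def)

lemma Phat_const: "const c \<in> Phat Z"
  by (simp add: Phat_def)

lemma Phat_one: "1 \<in> Phat Z"
  using Phat_const[of 1] by (simp add: const_def)

lemma Phat_var: "v \<notin> Z \<Longrightarrow> var v \<in> Phat Z"
  by (simp add: Phat_def)

lemma Phat_zero: "0 \<in> Phat Z"
  by (simp add: Phat_def indets_def)

lemma Phat_sum: "(\<And>x. x \<in> S \<Longrightarrow> g x \<in> Phat Z) \<Longrightarrow> sum g S \<in> Phat Z"
  by (induction S rule: infinite_finite_induct) (auto simp: Phat_zero Phat_add)

lemma Phat_power: "p \<in> Phat Z \<Longrightarrow> p ^ n \<in> Phat Z"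
  by (induction n) (auto simp: Phat_one Phat_mult)

lemma Phat_prod: "(\<And>x. x \<in> S \<Longrightarrow> g x \<in> Phat Z) \<Longrightarrow> prod g S \<in> Phat Z"
  by (induction S rule: infinite_finite_induct) (auto simp: Phat_one Phat_mult)

lemma subst_in_Phat: "(\<And>v. h v \<in> Phat Z) \<Longrightarrow> subst h a \<in> Phat Z"
  unfolding subst_def
  by (intro Phat_sum Phat_mult Phat_const Phat_prod Phat_power)

lemma subring_Phat: "subring (Phat Z) (mpoly_ring :: ('v, 'k::field) mpoly ring)"
proof -
  interpret cring "mpoly_ring :: ('v, 'k) mpoly ring" by (rule cring_mpoly_ring)
  show ?thesis by (rule subringI) (auto simp: Phat_one Phat_uminus Phat_mult Phat_add)
qed

lemma FactRing_iso_subring: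
  assumes R: "ring R" and I: "ideal I R" and S: "subring S R"
    and ph_in: "\<And>a. a \<in> carrier R \<Longrightarrow> ph a \<in> S"
    and ph_coset: "\<And>a. a \<in> carrier R \<Longrightarrow> I +>\<^bsub>R\<^esub> ph a = I +>\<^bsub>R\<^esub> a"
  obtains \<Phi> where "\<Phi> \<in> ring_iso (R Quot I) (R\<lparr>carrier := S\<rparr> Quot (I \<inter> S))"
    and "\<And>a. a \<in> carrier R \<Longrightarrow> \<Phi> (I +>\<^bsub>R\<^esub> a) = (I \<inter> S) +>\<^bsub>R\<lparr>carrier := S\<rparr>\<^esub> ph a"
    and "\<And>y. y \<in> S \<Longrightarrow>
           inv_into (carrier (R Quot I)) \<Phi> ((I \<inter> S) +>\<^bsub>R\<lparr>carrier := S\<rparr>\<^esub> y) = I +>\<^bsub>R\<^esub> y"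
proof -
  interpret ideal I R by (rule I)
  let ?S = "R\<lparr>carrier := S\<rparr>" and ?J = "I \<inter> S"
  interpret h: ring_hom_ring ?S "R Quot I" "(+>\<^bsub>R\<^esub>) I"
    using ring_hom_ring.induced_ring_hom[OF rcos_ring_hom_ring S] .
  have S_carr: "S \<subseteq> carrier R" using subringE(1)[OF S] .
  have "I +>\<^bsub>R\<^esub> y = I \<longleftrightarrow> y \<in> I" if "y \<in> carrier R" for y
    using a_rcos_const a_rcos_self[OF that] by blast
  then have kernel: "a_kernel ?S (R Quot I) ((+>\<^bsub>R\<^esub>) I) = ?J"
    using S_carr unfolding a_kernel_def' by (auto simp: FactRing_def)
  have onto: "(+>\<^bsub>R\<^esub>) I ` S = carrier (R Quot I)"
  proof
    show "(+>\<^bsub>R\<^esub>) I ` S \<subseteq> carrier (R Quot I)"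
      using S_carr by (auto simp: FactRing_def A_RCOSETS_def')
    show "carrier (R Quot I) \<subseteq> (+>\<^bsub>R\<^esub>) I ` S"
      using ph_in ph_coset by (auto simp: FactRing_def A_RCOSETS_def' intro!: image_eqI[of _ _ "ph _"])
  qed
  define \<Psi> where "\<Psi> X = the_elem ((+>\<^bsub>R\<^esub>) I ` X)" for X
  have \<Psi>: "\<Psi> \<in> ring_iso (?S Quot ?J) (R Quot I)"
    using h.FactRing_iso_set onto unfolding \<Psi>_def kernel by simp
  have \<Psi>_coset: "\<Psi> (?J +>\<^bsub>?S\<^esub> y) = I +>\<^bsub>R\<^esub> y" if "y \<in> S" for y
    using h.the_elem_simp[of y] that unfolding \<Psi>_def kernel by simp
  have coset_carr: "?J +>\<^bsub>?S\<^esub> y \<in> carrier (?S Quot ?J)" if "y \<in> S" for y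
    using that by (auto simp: FactRing_def A_RCOSETS_def')
  have bij: "bij_betw \<Psi> (carrier (?S Quot ?J)) (carrier (R Quot I))"
    using \<Psi> by (rule ring_iso_memE(5))
  have ring_SJ: "ring (?S Quot ?J)"
    using ideal.quotient_is_ring[OF h.kernel_is_ideal] unfolding kernel .
  show thesis
  proof
    show "inv_into (carrier (?S Quot ?J)) \<Psi> \<in> ring_iso (R Quot I) (?S Quot ?J)"
      using ring_iso_set_sym[OF ring_SJ \<Psi>] .
    show "inv_into (carrier (?S Quot ?J)) \<Psi> (I +>\<^bsub>R\<^esub> a) = ?J +>\<^bsub>?S\<^esub> ph a"
      if "a \<in> carrier R" for a
      using inv_into_f_f[OF bij_betw_imp_inj_on[OF bij] coset_carr[OF ph_in[OF that]]]
        \<Psi>_coset[OF ph_in[OF that]] ph_coset[OF that] by simp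
    show "inv_into (carrier (R Quot I)) (inv_into (carrier (?S Quot ?J)) \<Psi>) (?J +>\<^bsub>?S\<^esub> y)
        = I +>\<^bsub>R\<^esub> y" if "y \<in> S" for y
      using inv_into_inv_into_eq[OF bij coset_carr[OF that]] \<Psi>_coset[OF that] by simp
  qed
qed

lemma tail_in_Phat:
  assumes "coh_Z_sep s z f" "i < s"
  shows "tail (z i) (f i) \<in> Phat (z ` {..<s})"
proof -
  have "indets (tail (z i) (f i)) \<subseteq> {z i} \<union> indets (f i)"
    unfolding tail_def using indets_diff indets_mult by fastforce
  moreover have "z i \<notin> indets (tail (z i) (f i))"
    and "\<And>j. j < s \<Longrightarrow> j \<noteq> i \<Longrightarrow> z j \<notin> indets (f i)"
    using assms by (auto simp: coh_Z_sep_def z_separating_def)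
  ultimately have "z j \<notin> indets (tail (z i) (f i))" if "j < s" for j
    using that by (cases "j = i") auto
  then show ?thesis unfolding Phat_def by blast
qed

lemma Z_sep_GB_var_minus_tail:
  assumes "Z_sep_GB \<sigma> I s z f G" "i < s"
  shows "var (z i) - tail (z i) (f i) \<in> I"
proof -
  have "LT \<sigma> (f i) = Poly_Mapping.single (z i) 1" using assms by (simp add: Z_sep_GB_def)
  then have "var (z i) - tail (z i) (f i) = const (1 / LC \<sigma> (f i)) * f i"
    by (simp add: tail_def LC_def)
  moreover have "const (1 / LC \<sigma> (f i)) * f i \<in> basis_set \<sigma> s f G"
    using assms(2) unfolding basis_set_def by blast
  moreover have "basis_set \<sigma> s f G \<subseteq> I" using assms(1) by (simp add: Z_sep_GB_def is_GB_def)
  ultimately show ?thesis by auto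
qed

lemma phi_eq_subst:
  assumes "inj_on z {..<s}"
  obtains h where "phi s z f = subst h" "\<And>i. i < s \<Longrightarrow> h (z i) = tail (z i) (f i)"
    "\<And>v. v \<notin> z ` {..<s} \<Longrightarrow> h v = var v"
  by (rule that[of "\<lambda>x. if x \<in> z ` {..<s} then tail x (f (inv_into {..<s} z x)) else var x"])
    (auto simp: phi_def inv_into_f_f[OF assms])

lemma phi_in_Phat:
  assumes "coh_Z_sep s z f" "inj_on z {..<s}"
  shows "phi s z f a \<in> Phat (z ` {..<s})"
proof -
  obtain h where "phi s z f = subst h" "\<And>i. i < s \<Longrightarrow> h (z i) = tail (z i) (f i)"
    "\<And>v. v \<notin> z ` {..<s} \<Longrightarrow> h v = var v"
    using phi_eq_subst[OF assms(2), where f = f] by blast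
  moreover have "h v \<in> Phat (z ` {..<s})" for v
  proof (cases "v \<in> z ` {..<s}")
    case True
    then obtain i where "i < s" "v = z i" by auto
    then show ?thesis using calculation tail_in_Phat[OF assms(1)] by simp
  qed (simp add: calculation Phat_var)
  ultimately show ?thesis using subst_in_Phat by metis
qed

lemma phi_diff_in_ideal:
  assumes I: "ideal I mpoly_ring" and "inj_on z {..<s}"
    and f: "\<And>i. i < s \<Longrightarrow> var (z i) - tail (z i) (f i) \<in> I"
  shows "phi s z f a - a \<in> I"
proof -
  obtain h where "phi s z f = subst h" "\<And>i. i < s \<Longrightarrow> h (z i) = tail (z i) (f i)"
    "\<And>v. v \<notin> z ` {..<s} \<Longrightarrow> h v = var v"
    using phi_eq_subst[OF assms(2), where f = f] by blast
  moreover have "h v - var v \<in> I" for v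
  proof (cases "v \<in> z ` {..<s}")
    case True
    then obtain i where "i < s" "v = z i" by auto
    then show ?thesis
      using calculation mpoly_ideal_mult_left[OF I f, of i "-1"] by simp
  qed (simp add: calculation mpoly_ideal_zero[OF I])
  ultimately show ?thesis using subst_diff_in_ideal[OF I] by metis
qed

lemma phi_FactRing_iso:
  assumes I: "ideal I mpoly_ring" and inj: "inj_on z {..<s}" and coh: "coh_Z_sep s z f"
    and f: "\<And>i. i < s \<Longrightarrow> var (z i) - tail (z i) (f i) \<in> I"
  obtains \<Phi> where "\<Phi> \<in> ring_iso (mpoly_ring Quot I)
                   (Phat_ring (z ` {..<s}) Quot (I \<inter> Phat (z ` {..<s})))"
    and "\<And>a. \<Phi> (a_r_coset mpoly_ring I a)
              = a_r_coset (Phat_ring (z ` {..<s})) (I \<inter> Phat (z ` {..<s})) (phi s z f a)"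
    and "\<And>y. y \<in> Phat (z ` {..<s}) \<Longrightarrow>
           inv_into (carrier (mpoly_ring Quot I)) \<Phi>
             (a_r_coset (Phat_ring (z ` {..<s})) (I \<inter> Phat (z ` {..<s})) y)
           = a_r_coset mpoly_ring I y"
proof (rule FactRing_iso_subring[OF cring.axioms(1)[OF cring_mpoly_ring] I subring_Phat,
      of "phi s z f", folded Phat_ring_def])
  show "phi s z f a \<in> Phat (z ` {..<s})" for a
    using phi_in_Phat[OF coh inj] .
  show "I +>\<^bsub>mpoly_ring\<^esub> phi s z f a = I +>\<^bsub>mpoly_ring\<^esub> a" for a
    using mpoly_ring_coset_eq_iff[OF I] phi_diff_in_ideal[OF I inj f] by blast
qed (rule that; simp)

lemma phi_coset_independent:
  assumes I: "ideal I mpoly_ring" and inj: "inj_on z {..<s}"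
    and G: "Z_sep_GB \<sigma> I s z f G" and G': "Z_sep_GB \<sigma> I s z f' G'"
  shows "a_r_coset (Phat_ring (z ` {..<s})) (I \<inter> Phat (z ` {..<s})) (phi s z f' a)
       = a_r_coset (Phat_ring (z ` {..<s})) (I \<inter> Phat (z ` {..<s})) (phi s z f a)"
proof -
  have coh: "coh_Z_sep s z f" and coh': "coh_Z_sep s z f'"
    using G G' by (simp_all add: Z_sep_GB_def)
  have f: "\<And>i. i < s \<Longrightarrow> var (z i) - tail (z i) (f i) \<in> I"
    and f': "\<And>i. i < s \<Longrightarrow> var (z i) - tail (z i) (f' i) \<in> I"
    using Z_sep_GB_var_minus_tail[OF G] Z_sep_GB_var_minus_tail[OF G'] by blast+
  obtain \<Phi> where \<Phi>: "\<Phi> \<in> ring_iso (mpoly_ring Quot I)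
                   (Phat_ring (z ` {..<s}) Quot (I \<inter> Phat (z ` {..<s})))"
    and "\<And>a. \<Phi> (a_r_coset mpoly_ring I a)
              = a_r_coset (Phat_ring (z ` {..<s})) (I \<inter> Phat (z ` {..<s})) (phi s z f a)"
    and \<Phi>_inv: "\<And>y. y \<in> Phat (z ` {..<s}) \<Longrightarrow>
           inv_into (carrier (mpoly_ring Quot I)) \<Phi>
             (a_r_coset (Phat_ring (z ` {..<s})) (I \<inter> Phat (z ` {..<s})) y)
           = a_r_coset mpoly_ring I y"
    using phi_FactRing_iso[OF I inj coh f] by metis
  have coset_carr: "a_r_coset (Phat_ring (z ` {..<s})) (I \<inter> Phat (z ` {..<s})) y
      \<in> carrier (Phat_ring (z ` {..<s}) Quot (I \<inter> Phat (z ` {..<s})))"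
    if "y \<in> Phat (z ` {..<s})" for y
    using that by (auto simp: FactRing_def A_RCOSETS_def' Phat_ring_def)
  have inj_inv: "inj_on (inv_into (carrier (mpoly_ring Quot I)) \<Phi>)
      (carrier (Phat_ring (z ` {..<s}) Quot (I \<inter> Phat (z ` {..<s}))))"
    using bij_betw_inv_into[OF ring_iso_memE(5)[OF \<Phi>]] by (rule bij_betw_imp_inj_on)
  have in_Phat: "phi s z f a \<in> Phat (z ` {..<s})" "phi s z f' a \<in> Phat (z ` {..<s})"
    using phi_in_Phat inj coh coh' by blast+
  have "phi s z f' a - phi s z f a = (phi s z f' a - a) - (phi s z f a - a)"
    by simp
  also have "\<dots> \<in> I"
    using phi_diff_in_ideal[OF I inj f'] phi_diff_in_ideal[OF I inj f] by (rule mpoly_ideal_diff[OF I])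
  finally have "a_r_coset mpoly_ring I (phi s z f' a) = a_r_coset mpoly_ring I (phi s z f a)"
    using mpoly_ring_coset_eq_iff[OF I] by blast
  then show ?thesis
    using inj_onD[OF inj_inv] coset_carr \<Phi>_inv in_Phat by metis
qed

lemma lookup_const_mult: "Poly_Mapping.lookup (const c * f) t = c * Poly_Mapping.lookup f t"
  by (simp add: const_def mult_map_scale_conv_mult[symmetric] map.rep_eq when_def)

lemma keys_const_mult: "Poly_Mapping.keys (const c * f) \<subseteq> Poly_Mapping.keys f"
  by (auto simp: in_keys_iff lookup_const_mult)

lemma
  assumes "term_order \<sigma>"
  shows term_order_refl: "\<sigma> t t"
    and term_order_antisym: "\<sigma> s t \<Longrightarrow> \<sigma> t s \<Longrightarrow> s = t"
    and term_order_trans: "\<sigma> s t \<Longrightarrow> \<sigma> t u \<Longrightarrow> \<sigma> s u"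
    and term_order_total: "\<sigma> s t \<or> \<sigma> t s"
    and term_order_add: "\<sigma> s t \<Longrightarrow> \<sigma> (s + u) (t + u)"
    and term_order_zero_least: "\<sigma> 0 t"
  using assms unfolding term_order_def by blast+

lemma term_order_finite_greatest:
  assumes to: "term_order \<sigma>" and "finite S" "S \<noteq> {}"
  shows "\<exists>t\<in>S. \<forall>u\<in>S. \<sigma> u t"
  using assms(2,3)
proof (induction S rule: finite_ne_induct)
  case (singleton x)
  then show ?case using term_order_refl[OF to] by auto
next
  case (insert x F)
  then obtain t where t: "t \<in> F" "\<forall>u\<in>F. \<sigma> u t" by blast
  show ?case
  proof (cases "\<sigma> x t")
    case False
    then have "\<sigma> t x" using term_order_total[OF to] by blast
    then show ?thesis using t term_order_trans[OF to] term_order_refl[OF to] by blast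
  qed (use t in auto)
qed

lemma
  assumes to: "term_order \<sigma>" and "f \<noteq> 0"
  shows LT_in_keys: "LT \<sigma> f \<in> Poly_Mapping.keys f"
    and LT_greatest: "u \<in> Poly_Mapping.keys f \<Longrightarrow> \<sigma> u (LT \<sigma> f)"
proof -
  obtain t where t: "t \<in> Poly_Mapping.keys f" "\<forall>u\<in>Poly_Mapping.keys f. \<sigma> u t"
    using term_order_finite_greatest[OF to finite_keys] assms(2) by auto
  have "LT \<sigma> f = t"
    unfolding LT_def by (rule the_equality) (use t term_order_antisym[OF to] in blast)+
  then show "LT \<sigma> f \<in> Poly_Mapping.keys f" "u \<in> Poly_Mapping.keys f \<Longrightarrow> \<sigma> u (LT \<sigma> f)"
    using t by auto
qed

lemma LT_restr_order:
  assumes "f \<in> Phat Z"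
  shows "LT (restr_order \<sigma> Z) f = LT \<sigma> f"
proof -
  have "Poly_Mapping.keys t \<inter> Z = {}" if "t \<in> Poly_Mapping.keys f" for t
    using assms that unfolding Phat_def indets_def by blast
  then show ?thesis unfolding LT_def restr_order_def by metis
qed

lemma tdvd_single_one_iff: "tdvd (Poly_Mapping.single v 1) t \<longleftrightarrow> v \<in> Poly_Mapping.keys t"
proof
  assume "tdvd (Poly_Mapping.single v 1) t"
  then show "v \<in> Poly_Mapping.keys t" by (auto simp: tdvd_def in_keys_iff lookup_add)
next
  assume v: "v \<in> Poly_Mapping.keys t"
  have "t = Poly_Mapping.single v 1 + (t - Poly_Mapping.single v 1)"
    by (rule poly_mapping_eqI)
      (use v in \<open>auto simp: lookup_add lookup_minus lookup_single in_keys_iff when_def\<close>)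
  then show "tdvd (Poly_Mapping.single v 1) t" unfolding tdvd_def by blast
qed

lemma tdvd_single_one_imp_eq:
  assumes "tdvd t (Poly_Mapping.single v 1)" "t \<noteq> 0"
  shows "t = Poly_Mapping.single v 1"
proof -
  obtain u where u: "Poly_Mapping.single v 1 = t + u" using assms(1) by (auto simp: tdvd_def)
  have sum: "Poly_Mapping.lookup t k + Poly_Mapping.lookup u k = (if k = v then 1 else 0)" for k
    using arg_cong[OF u, of "\<lambda>p. Poly_Mapping.lookup p k"] by (auto simp: lookup_add lookup_single when_def)
  obtain k where "Poly_Mapping.lookup t k \<noteq> 0"
    using assms(2) by (metis lookup_zero poly_mapping_eqI)
  then have "Poly_Mapping.lookup t v = 1" using sum[of k] sum[of v] by (auto split: if_splits)
  show ?thesis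
  proof (rule poly_mapping_eqI)
    fix k
    show "Poly_Mapping.lookup t k = Poly_Mapping.lookup (Poly_Mapping.single v 1) k"
      using sum[of k] \<open>Poly_Mapping.lookup t v = 1\<close> by (cases "k = v") (auto simp: lookup_single)
  qed
qed

text \<open>A term divisible by \<open>v\<close> dominates \<open>v\<close>, so when \<open>v\<close> is the leading term it is the only
  term of \<open>f\<close> in which \<open>v\<close> occurs.\<close>

lemma LT_single_one_only_term:
  assumes to: "term_order \<sigma>" and f: "f \<noteq> 0" and LT: "LT \<sigma> f = Poly_Mapping.single v 1"
    and t: "t \<in> Poly_Mapping.keys f" and v: "v \<in> Poly_Mapping.keys t"
  shows "t = Poly_Mapping.single v 1"
proof -
  obtain u where u: "t = Poly_Mapping.single v 1 + u"
    using v tdvd_single_one_iff[of v t] by (auto simp: tdvd_def)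
  have "\<sigma> (0 + Poly_Mapping.single v 1) (u + Poly_Mapping.single v 1)"
    by (rule term_order_add[OF to term_order_zero_least[OF to]])
  then have "\<sigma> (Poly_Mapping.single v 1) t" using u by (simp add: add.commute)
  moreover have "\<sigma> t (Poly_Mapping.single v 1)" using LT_greatest[OF to f t] LT by simp
  ultimately show ?thesis using term_order_antisym[OF to] by blast
qed

lemma single_one_eq_iff: "Poly_Mapping.single a (1::nat) = Poly_Mapping.single b 1 \<longleftrightarrow> a = b"
  by (metis lookup_single_eq lookup_single_not_eq one_neq_zero)

lemma lookup_lin_part_single_one:
  "Poly_Mapping.lookup (lin_part f) (Poly_Mapping.single v 1)
     = (if v \<in> indets f then Poly_Mapping.lookup f (Poly_Mapping.single v 1) else 0)"
proof -
  have "Poly_Mapping.lookup (lin_part f) (Poly_Mapping.single v 1)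
     = (\<Sum>w\<in>indets f. if w = v then Poly_Mapping.lookup f (Poly_Mapping.single w 1) else 0)"
    unfolding lin_part_def lookup_sum lookup_single when_def single_one_eq_iff by (intro sum.cong) auto
  also have "\<dots> = (if v \<in> indets f then Poly_Mapping.lookup f (Poly_Mapping.single v 1) else 0)"
    by (rule sum.delta) (simp add: indets_def)
  finally show ?thesis .
qed

lemma z_separating_if_LT_single_one:
  fixes f :: "('v, 'k::field) mpoly"
  assumes to: "term_order \<sigma>" and "f \<in> Mideal" "f \<noteq> 0"
    and LT: "LT \<sigma> f = Poly_Mapping.single v 1"
  shows "z_separating v f"
proof -
  let ?c = "Poly_Mapping.lookup f (Poly_Mapping.single v 1)"
  have key: "Poly_Mapping.single v 1 \<in> Poly_Mapping.keys f"
    using LT_in_keys[OF to assms(3)] LT by simp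
  have v_single: "v \<in> Poly_Mapping.keys (Poly_Mapping.single v (1::nat))" by simp
  with key have "v \<in> indets f" unfolding indets_def by blast
  then have "Poly_Mapping.lookup (lin_part f) (Poly_Mapping.single v 1) = ?c"
    by (simp only: lookup_lin_part_single_one if_True)
  then have "Poly_Mapping.single v 1 \<in> Poly_Mapping.keys (lin_part f)"
    using key by (simp add: in_keys_iff)
  then have lin: "lin_part f \<noteq> 0" "v \<in> indets (lin_part f)"
    using v_single unfolding indets_def by (auto, blast)
  have "t = Poly_Mapping.single v 1"
    if "t \<in> Poly_Mapping.keys (tail v f)" "v \<in> Poly_Mapping.keys t" for t
  proof -
    have "t \<in> Poly_Mapping.keys (var v :: ('v, 'k) mpoly) \<union> Poly_Mapping.keys (const (1 / ?c) * f)"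
      using that(1) keys_diff[of "var v" "const (1 / ?c) * f"] unfolding tail_def by blast
    then have "t \<in> Poly_Mapping.keys f \<or> t = Poly_Mapping.single v 1"
      using keys_const_mult[of "1 / ?c" f] by (auto simp: var_def)
    then show ?thesis using LT_single_one_only_term[OF to assms(3) LT _ that(2)] by blast
  qed
  moreover have "?c \<noteq> 0" using key by (simp add: in_keys_iff)
  then have "Poly_Mapping.single v 1 \<notin> Poly_Mapping.keys (tail v f)"
    by (simp add: tail_def lookup_minus lookup_const_mult var_def in_keys_iff)
  ultimately have "v \<notin> indets (tail v f)"
    unfolding indets_def by blast
  with assms(2) lin show ?thesis unfolding z_separating_def by blast
qed

context
  fixes \<sigma> :: "'v pterm \<Rightarrow> 'v pterm \<Rightarrow> bool" and B I :: "('v, 'k::field) mpoly set"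
  assumes to: "term_order \<sigma>" and red: "is_reduced_GB \<sigma> B I"
begin

lemma
  shows reduced_GB_finite: "finite B"
    and reduced_GB_subset: "B \<subseteq> I"
    and reduced_GB_nonzero: "0 \<notin> B"
    and reduced_GB_LT_dvd: "h \<in> I \<Longrightarrow> h \<noteq> 0 \<Longrightarrow> \<exists>g\<in>B. tdvd (LT \<sigma> g) (LT \<sigma> h)"
    and reduced_GB_monic: "g \<in> B \<Longrightarrow> LC \<sigma> g = 1"
    and reduced_GB_reduced:
      "g \<in> B \<Longrightarrow> t \<in> Poly_Mapping.keys g \<Longrightarrow> g' \<in> B \<Longrightarrow> g' \<noteq> g \<Longrightarrow> \<not> tdvd (LT \<sigma> g') t"
  using red unfolding is_reduced_GB_def is_GB_def by blast+

lemma reduced_GB_var_not_in_indets: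
  assumes "b \<in> B" "LT \<sigma> b = Poly_Mapping.single v 1" "g \<in> B" "g \<noteq> b"
  shows "v \<notin> indets g"
proof
  assume "v \<in> indets g"
  then obtain t where "t \<in> Poly_Mapping.keys g" "tdvd (LT \<sigma> b) t"
    unfolding indets_def assms(2) tdvd_single_one_iff by blast
  then show False using assms reduced_GB_reduced by blast
qed

lemma reduced_GB_has_LT_single_one:
  assumes "I \<subseteq> Mideal" "F \<in> I" "F \<noteq> 0" "LT \<sigma> F = Poly_Mapping.single v 1"
  shows "\<exists>b\<in>B. LT \<sigma> b = Poly_Mapping.single v 1"
proof -
  obtain b where b: "b \<in> B" "tdvd (LT \<sigma> b) (Poly_Mapping.single v 1)"
    using reduced_GB_LT_dvd[OF assms(2,3)] assms(4) by auto
  have "b \<noteq> 0" using b(1) reduced_GB_nonzero by blast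
  moreover have "Poly_Mapping.lookup b 0 = 0"
    using b(1) reduced_GB_subset assms(1) by (auto simp: Mideal_def)
  ultimately have "LT \<sigma> b \<noteq> 0"
    using LT_in_keys[OF to] by (metis in_keys_iff)
  then show ?thesis using b tdvd_single_one_imp_eq[OF b(2)] by blast
qed

lemma reduced_GB_Int_Phat:
  assumes elim: "\<And>b. b \<in> B \<Longrightarrow> b \<notin> Phat Z \<Longrightarrow> Poly_Mapping.keys (LT \<sigma> b) \<inter> Z \<noteq> {}"
  shows "is_reduced_GB (restr_order \<sigma> Z) (B \<inter> Phat Z) (I \<inter> Phat Z)"
  unfolding is_reduced_GB_def is_GB_def
proof (intro conjI ballI impI)
  show "finite (B \<inter> Phat Z)" "B \<inter> Phat Z \<subseteq> I \<inter> Phat Z" "0 \<notin> B \<inter> Phat Z"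
    using reduced_GB_finite reduced_GB_subset reduced_GB_nonzero by auto
  fix h assume h: "h \<in> I \<inter> Phat Z" "h \<noteq> 0"
  then obtain b where b: "b \<in> B" "tdvd (LT \<sigma> b) (LT \<sigma> h)"
    using reduced_GB_LT_dvd[of h] by blast
  have "Poly_Mapping.keys (LT \<sigma> h) \<inter> Z = {}"
    using h(1) LT_in_keys[OF to h(2)] unfolding Phat_def indets_def by blast
  moreover have "Poly_Mapping.keys (LT \<sigma> b) \<subseteq> Poly_Mapping.keys (LT \<sigma> h)"
    using b(2) by (auto simp: tdvd_def in_keys_iff lookup_add)
  ultimately have "b \<in> Phat Z" using elim[OF b(1)] by blast
  then show "\<exists>g\<in>B \<inter> Phat Z. tdvd (LT (restr_order \<sigma> Z) g) (LT (restr_order \<sigma> Z) h)"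
    using b h(1) LT_restr_order by (metis IntD2 IntI)
next
  fix g assume "g \<in> B \<inter> Phat Z"
  then show "LC (restr_order \<sigma> Z) g = 1"
    using reduced_GB_monic unfolding LC_def by (simp add: LT_restr_order)
next
  fix g t g' assume "g \<in> B \<inter> Phat Z" "t \<in> Poly_Mapping.keys g" "g' \<in> B \<inter> Phat Z" "g' \<noteq> g"
  then show "\<not> tdvd (LT (restr_order \<sigma> Z) g') t"
    using reduced_GB_reduced[of g t g'] by (simp add: LT_restr_order)
qed

end

lemma reduced_GB_is_Z_sep_GB:
  assumes to: "term_order \<sigma>" and inj: "inj_on z {..<s}" and IM: "I \<subseteq> Mideal"
    and LT_var: "\<And>i. i < s \<Longrightarrow> \<exists>F\<in>I. F \<noteq> 0 \<and> LT \<sigma> F = Poly_Mapping.single (z i) 1"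
    and red: "is_reduced_GB \<sigma> B I"
  shows "\<exists>f' G'. B = basis_set \<sigma> s f' G' \<and> Z_sep_GB \<sigma> I s z f' G'"
proof -
  define Z where "Z = z ` {..<s}"
  define f' where "f' i = (SOME b. b \<in> B \<and> LT \<sigma> b = Poly_Mapping.single (z i) 1)" for i
  have "f' i \<in> B \<and> LT \<sigma> (f' i) = Poly_Mapping.single (z i) 1" if i: "i < s" for i
  proof -
    obtain F where "F \<in> I" "F \<noteq> 0" "LT \<sigma> F = Poly_Mapping.single (z i) 1"
      using LT_var[OF i] by blast
    then have "\<exists>b. b \<in> B \<and> LT \<sigma> b = Poly_Mapping.single (z i) 1"
      using reduced_GB_has_LT_single_one[OF to red IM] by blast
    then show ?thesis unfolding f'_def by (rule someI_ex)
  qed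
  then have f'B: "f' i \<in> B" and f'LT: "LT \<sigma> (f' i) = Poly_Mapping.single (z i) 1"
    if "i < s" for i
    using that by blast+
  have f'_eq: "b = f' i" if "b \<in> B" "z i \<in> indets b" "i < s" for b i
    using reduced_GB_var_not_in_indets[OF to red f'B[OF that(3)] f'LT[OF that(3)] that(1)] that(2)
    by blast
  have not_Phat: "\<exists>i<s. b = f' i" if b: "b \<in> B" "b \<notin> Phat Z" for b
  proof -
    obtain i where "i < s" "z i \<in> indets b"
      using b(2) unfolding Z_def Phat_def by blast
    then show ?thesis using f'_eq[OF b(1)] by blast
  qed
  have "const (1 / LC \<sigma> (f' i)) * f' i = f' i" if "i < s" for i
    using reduced_GB_monic[OF to red f'B[OF that]] by (simp add: const_def)
  then have "{const (1 / LC \<sigma> (f' i)) * f' i | i. i < s} = f' ` {..<s}"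
    by auto metis
  moreover have "B = f' ` {..<s} \<union> (B \<inter> Phat Z)"
  proof
    show "B \<subseteq> f' ` {..<s} \<union> (B \<inter> Phat Z)" using not_Phat by blast
    show "f' ` {..<s} \<union> (B \<inter> Phat Z) \<subseteq> B" using f'B by blast
  qed
  ultimately have basis: "B = basis_set \<sigma> s f' (B \<inter> Phat Z)"
    unfolding basis_set_def by simp
  have notin: "z i \<notin> indets (f' j)" if ij: "i < s" "j < s" "j \<noteq> i" for i j
  proof -
    have "z j \<noteq> z i" using inj ij by (auto dest: inj_onD)
    then have "f' j \<noteq> f' i" using f'LT[OF ij(1)] f'LT[OF ij(2)] single_one_eq_iff by metis
    then show ?thesis
      using reduced_GB_var_not_in_indets[OF to red f'B[OF ij(1)] f'LT[OF ij(1)] f'B[OF ij(2)]] by blast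
  qed
  have coh: "coh_Z_sep s z f'"
    unfolding coh_Z_sep_def
  proof (intro allI impI conjI)
    fix i assume i: "i < s"
    show nz: "f' i \<noteq> 0" using f'B[OF i] reduced_GB_nonzero[OF to red] by auto
    show M: "f' i \<in> Mideal" using f'B[OF i] reduced_GB_subset[OF to red] IM by blast
    show "z_separating (z i) (f' i)" by (rule z_separating_if_LT_single_one[OF to M nz f'LT[OF i]])
    show "z i \<notin> indets (f' j)" if "j < s" "j \<noteq> i" for j using notin[OF i that] .
  qed
  have "is_reduced_GB (restr_order \<sigma> Z) (B \<inter> Phat Z) (I \<inter> Phat Z)"
  proof (rule reduced_GB_Int_Phat[OF to red])
    fix b assume "b \<in> B" "b \<notin> Phat Z"
    then obtain i where "i < s" "b = f' i" using not_Phat by blast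
    then show "Poly_Mapping.keys (LT \<sigma> b) \<inter> Z \<noteq> {}" using f'LT by (simp add: Z_def)
  qed
  moreover have "is_GB \<sigma> B I" using red by (simp add: is_reduced_GB_def)
  ultimately have "Z_sep_GB \<sigma> I s z f' (B \<inter> Phat Z)"
    unfolding Z_sep_GB_def Z_def[symmetric] basis[symmetric] using coh f'LT by blast
  then show ?thesis using basis by blast
qed

theorem theorem2p13:
  fixes I :: "('v::finite, 'k::field) mpoly set"
    and s :: nat and z :: "nat \<Rightarrow> 'v"
    and \<sigma> :: "'v pterm \<Rightarrow> 'v pterm \<Rightarrow> bool"
    and f :: "nat \<Rightarrow> ('v, 'k) mpoly" and G :: "('v, 'k) mpoly set"
  assumes "ideal I mpoly_ring"
    and "I \<subseteq> Mideal"
    and "inj_on z {..<s}"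
    and "Z_sep_order \<sigma> I s z"
    and "Z_sep_GB \<sigma> I s z f G"
  shows "(\<forall>a. phi s z f a \<in> Phat (z ` {..<s})) \<and>
    (\<exists>\<Phi>. \<Phi> \<in> ring_iso (mpoly_ring Quot I)
                   (Phat_ring (z ` {..<s}) Quot (I \<inter> Phat (z ` {..<s})))
      \<and> (\<forall>a. \<Phi> (a_r_coset mpoly_ring I a)
              = a_r_coset (Phat_ring (z ` {..<s})) (I \<inter> Phat (z ` {..<s})) (phi s z f a))
      \<and> (\<forall>y. y \<notin> z ` {..<s} \<longrightarrow>
           inv_into (carrier (mpoly_ring Quot I)) \<Phi>
             (a_r_coset (Phat_ring (z ` {..<s})) (I \<inter> Phat (z ` {..<s})) (var y))
           = a_r_coset mpoly_ring I (var y)))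
    \<and> (\<forall>f' G'. Z_sep_GB \<sigma> I s z f' G' \<longrightarrow>
         (\<forall>a. a_r_coset (Phat_ring (z ` {..<s})) (I \<inter> Phat (z ` {..<s})) (phi s z f' a)
            = a_r_coset (Phat_ring (z ` {..<s})) (I \<inter> Phat (z ` {..<s})) (phi s z f a)))
    \<and> (\<forall>B. is_reduced_GB \<sigma> B I \<longrightarrow> (\<exists>f' G'. B = basis_set \<sigma> s f' G' \<and> Z_sep_GB \<sigma> I s z f' G'))"
proof -
  note I = assms(1) and inj = assms(3) and GB = assms(5)
  obtain F where to: "term_order \<sigma>"
    and F: "\<And>i. i < s \<Longrightarrow> F i \<in> I \<and> F i \<noteq> 0 \<and> LT \<sigma> (F i) = Poly_Mapping.single (z i) 1"
    using assms(4) unfolding Z_sep_order_def by blast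
  have coh: "coh_Z_sep s z f" using GB by (simp add: Z_sep_GB_def)
  have f: "\<And>i. i < s \<Longrightarrow> var (z i) - tail (z i) (f i) \<in> I"
    using Z_sep_GB_var_minus_tail[OF GB] by blast
  obtain \<Phi> where iso: "\<Phi> \<in> ring_iso (mpoly_ring Quot I)
                   (Phat_ring (z ` {..<s}) Quot (I \<inter> Phat (z ` {..<s})))"
    and coset: "\<And>a. \<Phi> (a_r_coset mpoly_ring I a)
              = a_r_coset (Phat_ring (z ` {..<s})) (I \<inter> Phat (z ` {..<s})) (phi s z f a)"
    and inv: "\<And>y. y \<in> Phat (z ` {..<s}) \<Longrightarrow>
           inv_into (carrier (mpoly_ring Quot I)) \<Phi>
             (a_r_coset (Phat_ring (z ` {..<s})) (I \<inter> Phat (z ` {..<s})) y)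
           = a_r_coset mpoly_ring I y"
    using phi_FactRing_iso[OF I inj coh f] by metis
  have reduced: "\<exists>f' G'. B = basis_set \<sigma> s f' G' \<and> Z_sep_GB \<sigma> I s z f' G'"
    if "is_reduced_GB \<sigma> B I" for B
    using reduced_GB_is_Z_sep_GB[OF to inj assms(2) _ that] F by blast
  show ?thesis
    using phi_in_Phat[OF coh inj] iso coset inv[OF Phat_var] phi_coset_independent[OF I inj GB] reduced
    by (intro conjI allI impI exI[of _ \<Phi>]) auto
qed

end
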